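(* Let $G$ be a finite group and $C_2$ the cyclic group of order $2$. Suppose that every torsion unit of $V(\mathbb{Z}G)$ is conjugate within $\mathbb{Q}G$ to an element of $G$. Then every torsion unit of $V(\mathbb{Z}[G \times C_2])$ is conjugate within $\mathbb{Q}[G \times C_2]$ to an element of $G \times C_2$.
   Context: For a finite group $H$, $V(\mathbb{Z}H)$ denotes the group of units of augmentation $1$ of the integral group ring $\mathbb{Z}H$, where the augmentation of $\sum_h \alpha_h h$ is $\sum_h \alpha_h$. A torsion unit is a unit of finite order. "Conjugate within $\mathbb{Q}H$" means conjugate by a unit of the rational group algebra $\mathbb{Q}H$. *)

theory Defs
  imports Complex_Main "HOL-Algebra.Group"
begin

text \<open>Group ring R[G] of a finite group G (HOL-Algebra structure) with coefficients in a
  commutative ring R (type class): elements are functions carrier G \<Rightarrow> R, zero outside the carrier.\<close>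

definition gr_elems :: "('a, 'm) monoid_scheme \<Rightarrow> ('a \<Rightarrow> 'r::comm_ring_1) set" where
  "gr_elems G = {f. \<forall>x. x \<notin> carrier G \<longrightarrow> f x = 0}"

definition gr_mult :: "('a, 'm) monoid_scheme \<Rightarrow> ('a \<Rightarrow> 'r::comm_ring_1) \<Rightarrow> ('a \<Rightarrow> 'r) \<Rightarrow> ('a \<Rightarrow> 'r)" where
  "gr_mult G a b = (\<lambda>g. if g \<in> carrier G
       then (\<Sum>h\<in>carrier G. a h * b (inv\<^bsub>G\<^esub> h \<otimes>\<^bsub>G\<^esub> g)) else 0)"

definition gr_of :: "('a, 'm) monoid_scheme \<Rightarrow> 'a \<Rightarrow> ('a \<Rightarrow> 'r::comm_ring_1)" where
  "gr_of G g = (\<lambda>x. if x = g then 1 else 0)"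

definition gr_one :: "('a, 'm) monoid_scheme \<Rightarrow> ('a \<Rightarrow> 'r::comm_ring_1)" where
  "gr_one G = gr_of G \<one>\<^bsub>G\<^esub>"

primrec gr_pow :: "('a, 'm) monoid_scheme \<Rightarrow> ('a \<Rightarrow> 'r::comm_ring_1) \<Rightarrow> nat \<Rightarrow> ('a \<Rightarrow> 'r)" where
  "gr_pow G a 0 = gr_one G"
| "gr_pow G a (Suc n) = gr_mult G (gr_pow G a n) a"

definition gr_aug :: "('a, 'm) monoid_scheme \<Rightarrow> ('a \<Rightarrow> 'r::comm_ring_1) \<Rightarrow> 'r" where
  "gr_aug G a = (\<Sum>g\<in>carrier G. a g)"

definition gr_unit :: "('a, 'm) monoid_scheme \<Rightarrow> ('a \<Rightarrow> 'r::comm_ring_1) \<Rightarrow> bool" where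
  "gr_unit G a \<longleftrightarrow> a \<in> gr_elems G \<and>
     (\<exists>b \<in> gr_elems G. gr_mult G a b = gr_one G \<and> gr_mult G b a = gr_one G)"

definition torsion_unit_V :: "('a, 'm) monoid_scheme \<Rightarrow> ('a \<Rightarrow> int) \<Rightarrow> bool" where
  "torsion_unit_V G u \<longleftrightarrow> gr_unit G u \<and> gr_aug G u = 1 \<and> (\<exists>n>0. gr_pow G u n = gr_one G)"

definition QG_conj_to_group_elem :: "('a, 'm) monoid_scheme \<Rightarrow> ('a \<Rightarrow> int) \<Rightarrow> bool" where
  "QG_conj_to_group_elem G u \<longleftrightarrow>
     (\<exists>w w' :: 'a \<Rightarrow> rat. w \<in> gr_elems G \<and> w' \<in> gr_elems G \<and>
        gr_mult G w w' = gr_one G \<and> gr_mult G w' w = gr_one G \<and>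
        (\<exists>g \<in> carrier G. gr_mult G (gr_mult G w' (\<lambda>x. of_int (u x))) w = gr_of G g))"

definition ZC_property :: "('a, 'm) monoid_scheme \<Rightarrow> bool" where
  "ZC_property G \<longleftrightarrow> (\<forall>u. torsion_unit_V G u \<longrightarrow> QG_conj_to_group_elem G u)"

definition C2 :: "bool monoid" where
  "C2 = \<lparr>carrier = UNIV, mult = (\<lambda>x y. x \<noteq> y), one = False\<rparr>"

end

theory Submission
  imports Defs
begin

text \<open>Since 2 is invertible in \<open>\<rat>\<close>, the two characters of \<open>C\<^sub>2\<close> split
  \<open>\<rat>[G \<times> C\<^sub>2]\<close> as \<open>\<rat>G \<times> \<rat>G\<close>, \<open>u \<mapsto> (u\<^sub>+, u\<^sub>-)\<close> with
  \<open>u\<^sub>\<plusminus>(x) = u(x, 0) \<plusminus> u(x, 1)\<close>. For a torsion unit \<open>u\<close> of \<open>V(\<int>[G \<times> C\<^sub>2])\<close>,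
  both \<open>u\<^sub>+\<close> and \<open>\<plusminus>u\<^sub>-\<close> are torsion units of \<open>V(\<int>G)\<close>, hence conjugate in \<open>\<rat>G\<close> to
  some \<open>g\<close> and \<open>h\<close> in \<open>G\<close>. Partial augmentations are invariant under conjugation, and
  \<open>\<epsilon>\<^sub>C(u\<^sub>+) - \<epsilon>\<^sub>C(u\<^sub>-) = 2 \<epsilon>\<^sub>C(u(-, 1))\<close> is even; for \<open>C\<close> the class of \<open>g\<close>
  this gives \<open>\<epsilon>\<^sub>C(u\<^sub>-) \<noteq> 0\<close>, so \<open>h\<close> is conjugate to \<open>g\<close> in \<open>G\<close>. After adjusting the
  second conjugating unit by that element of \<open>G\<close>, the pair of conjugating units lifts back to
  \<open>\<rat>[G \<times> C\<^sub>2]\<close> and conjugates \<open>u\<close> to \<open>(g, e)\<close>, where \<open>e\<close> records the sign.\<close>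

lemma gr_mult_elems: "gr_mult G a b \<in> gr_elems G"
  by (simp add: gr_mult_def gr_elems_def)

lemma gr_of_elems: "gr_of G g \<in> gr_elems G \<longleftrightarrow> g \<in> carrier G"
  by (auto simp: gr_of_def gr_elems_def)

lemma gr_mult_smult_left: "gr_mult G (\<lambda>x. c * a x) b = (\<lambda>x. c * gr_mult G a b x)"
  by (rule ext) (simp add: gr_mult_def sum_distrib_left mult.assoc)

lemma gr_mult_smult_right: "gr_mult G a (\<lambda>x. c * b x) = (\<lambda>x. c * gr_mult G a b x)"
  by (rule ext) (simp add: gr_mult_def sum_distrib_left mult.left_commute)

lemma gr_pow_smult: "gr_pow G (\<lambda>x. c * a x) n = (\<lambda>x. c ^ n * gr_pow G a n x)"
  by (induction n) (simp_all add: gr_mult_smult_left gr_mult_smult_right mult_ac)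

lemma gr_unit_smult:
  assumes "gr_unit G a" and "c * c = 1"
  shows "gr_unit G (\<lambda>x. c * a x)"
proof -
  obtain b where "b \<in> gr_elems G" "gr_mult G a b = gr_one G" "gr_mult G b a = gr_one G"
    and "a \<in> gr_elems G"
    using assms(1) by (auto simp: gr_unit_def)
  then show ?thesis
    unfolding gr_unit_def using assms(2)
    by (intro conjI bexI[of _ "\<lambda>x. c * b x"])
       (auto simp: gr_elems_def gr_mult_smult_left gr_mult_smult_right mult.assoc[symmetric])
qed

lemma gr_aug_smult: "gr_aug G (\<lambda>x. c * a x) = c * gr_aug G a"
  by (simp add: gr_aug_def sum_distrib_left)

lemma gr_unit_hom:
  assumes "gr_unit H a"
    and "\<And>x y. f (gr_mult H x y) = gr_mult G (f x) (f y)" and "f (gr_one H) = gr_one G"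
    and "\<And>x. x \<in> gr_elems H \<Longrightarrow> f x \<in> gr_elems G"
  shows "gr_unit G (f a)"
  using assms unfolding gr_unit_def by metis

lemma gr_pow_hom:
  assumes "\<And>x y. f (gr_mult H x y) = gr_mult G (f x) (f y)" and "f (gr_one H) = gr_one G"
  shows "f (gr_pow H a n) = gr_pow G (f a) n"
  by (induction n) (simp_all add: assms)

definition gr_conj_by ::
    "('a, 'm) monoid_scheme \<Rightarrow> ('a \<Rightarrow> 'r::comm_ring_1) \<Rightarrow> ('a \<Rightarrow> 'r) \<Rightarrow> ('a \<Rightarrow> 'r) \<Rightarrow> ('a \<Rightarrow> 'r) \<Rightarrow> bool"
  where "gr_conj_by G w w' x y \<longleftrightarrow> w \<in> gr_elems G \<and> w' \<in> gr_elems G \<and>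
     gr_mult G w w' = gr_one G \<and> gr_mult G w' w = gr_one G \<and> gr_mult G (gr_mult G w' x) w = y"

lemma QG_conj_to_group_elem_iff:
  "QG_conj_to_group_elem G u \<longleftrightarrow>
     (\<exists>w w' :: 'a \<Rightarrow> rat. \<exists>g \<in> carrier G. gr_conj_by G w w' (\<lambda>x. of_int (u x)) (gr_of G g))"
  by (auto simp: QG_conj_to_group_elem_def gr_conj_by_def)

lemma gr_conj_by_smult:
  "gr_conj_by G w w' x y \<Longrightarrow> gr_conj_by G w w' (\<lambda>g. c * x g) (\<lambda>g. c * y g)"
  by (simp add: gr_conj_by_def gr_mult_smult_left gr_mult_smult_right)

locale finite_group = group + assumes finite_carrier: "finite (carrier G)"

context finite_group
begin

lemma sum_carrier_lmult:
  assumes "h \<in> carrier G"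
  shows "(\<Sum>g\<in>carrier G. f g) = (\<Sum>k\<in>carrier G. f (h \<otimes> k))"
  by (rule sum.reindex_bij_witness[where i="\<lambda>k. h \<otimes> k" and j="\<lambda>g. inv h \<otimes> g"])
     (auto simp: assms m_assoc[symmetric])

lemma gr_mult_assoc: "gr_mult G (gr_mult G a b) c = gr_mult G a (gr_mult G b c)"
proof (rule ext)
  fix g
  show "gr_mult G (gr_mult G a b) c g = gr_mult G a (gr_mult G b c) g"
  proof (cases "g \<in> carrier G")
    case True
    have "gr_mult G (gr_mult G a b) c g =
        (\<Sum>h\<in>carrier G. \<Sum>k\<in>carrier G. a k * b (inv k \<otimes> h) * c (inv h \<otimes> g))"
      using True by (simp add: gr_mult_def sum_distrib_right)
    also have "\<dots> = (\<Sum>k\<in>carrier G. a k * (\<Sum>h\<in>carrier G. b (inv k \<otimes> h) * c (inv h \<otimes> g)))"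
      by (subst sum.swap) (simp add: sum_distrib_left mult.assoc)
    also have "\<dots> = (\<Sum>k\<in>carrier G. a k * (\<Sum>h\<in>carrier G. b h * c (inv h \<otimes> (inv k \<otimes> g))))"
    proof (rule sum.cong[OF refl])
      fix k assume k: "k \<in> carrier G"
      have "(\<Sum>h\<in>carrier G. b (inv k \<otimes> h) * c (inv h \<otimes> g))
          = (\<Sum>h\<in>carrier G. b (inv k \<otimes> (k \<otimes> h)) * c (inv (k \<otimes> h) \<otimes> g))"
        by (rule sum_carrier_lmult[OF k])
      also have "\<dots> = (\<Sum>h\<in>carrier G. b h * c (inv h \<otimes> (inv k \<otimes> g)))"
        using k True by (intro sum.cong refl) (simp add: m_assoc[symmetric] inv_mult_group)
      finally show "a k * (\<Sum>h\<in>carrier G. b (inv k \<otimes> h) * c (inv h \<otimes> g)) =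
          a k * (\<Sum>h\<in>carrier G. b h * c (inv h \<otimes> (inv k \<otimes> g)))" by simp
    qed
    also have "\<dots> = gr_mult G a (gr_mult G b c) g"
      using True by (simp add: gr_mult_def)
    finally show ?thesis .
  qed (simp add: gr_mult_def)
qed

lemma gr_one_mult:
  assumes "a \<in> gr_elems G"
  shows "gr_mult G (gr_one G) a = a"
proof (rule ext)
  fix g
  show "gr_mult G (gr_one G) a g = a g"
  proof (cases "g \<in> carrier G")
    case True
    then have "gr_mult G (gr_one G) a g = (\<Sum>h\<in>carrier G. if h = \<one> then a (inv h \<otimes> g) else 0)"
      by (auto simp: gr_mult_def gr_one_def gr_of_def intro!: sum.cong)
    also have "\<dots> = a g" using True finite_carrier by simp
    finally show ?thesis .
  qed (use assms in \<open>simp add: gr_mult_def gr_elems_def\<close>)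
qed

lemma gr_mult_one_apply:
  assumes "g \<in> carrier G"
  shows "gr_mult G a (gr_one G) g = a g"
proof -
  have "gr_mult G a (gr_one G) g = (\<Sum>h\<in>carrier G. if h = g then a h else 0)"
    using assms by (auto simp: gr_mult_def gr_one_def gr_of_def intro!: sum.cong)
      (metis inv_equality r_inv inv_closed l_cancel_one)
  then show ?thesis using assms finite_carrier by simp
qed

lemma gr_of_mult:
  assumes "g \<in> carrier G" and "h \<in> carrier G"
  shows "gr_mult G (gr_of G g) (gr_of G h) = gr_of G (g \<otimes> h)"
proof (rule ext)
  fix x
  show "gr_mult G (gr_of G g) (gr_of G h) x = gr_of G (g \<otimes> h) x"
  proof (cases "x \<in> carrier G")
    case True
    have "gr_mult G (gr_of G g) (gr_of G h) x
        = (\<Sum>k\<in>carrier G. if k = g then gr_of G h (inv k \<otimes> x) else 0)"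
      using True by (auto simp: gr_mult_def gr_of_def intro!: sum.cong)
    also have "\<dots> = gr_of G h (inv g \<otimes> x)" using assms finite_carrier by simp
    also have "\<dots> = gr_of G (g \<otimes> h) x"
      using assms True by (auto simp: gr_of_def m_assoc[symmetric])
    finally show ?thesis .
  qed (use assms in \<open>auto simp: gr_mult_def gr_of_def\<close>)
qed

lemma gr_aug_mult: "gr_aug G (gr_mult G a b) = gr_aug G a * gr_aug G b"
proof -
  have "gr_aug G (gr_mult G a b) = (\<Sum>h\<in>carrier G. a h * (\<Sum>g\<in>carrier G. b (inv h \<otimes> g)))"
    by (simp add: gr_aug_def gr_mult_def sum_distrib_left) (rule sum.swap)
  also have "\<dots> = (\<Sum>h\<in>carrier G. a h * gr_aug G b)"
    unfolding gr_aug_def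
    by (intro sum.cong refl, subst sum_carrier_lmult) (auto simp: m_assoc[symmetric])
  finally show ?thesis by (simp add: gr_aug_def sum_distrib_right)
qed

lemma gr_aug_one: "gr_aug G (gr_one G) = 1"
  using finite_carrier by (simp add: gr_aug_def gr_one_def gr_of_def)

lemma gr_aug_pow: "gr_aug G (gr_pow G a n) = gr_aug G a ^ n"
  by (induction n) (simp_all add: gr_aug_one gr_aug_mult)

lemma gr_conj_by_trans:
  assumes "gr_conj_by G w w' x y" and "gr_conj_by G v v' y z"
  shows "gr_conj_by G (gr_mult G w v) (gr_mult G v' w') x z"
  using assms unfolding gr_conj_by_def
  by (metis gr_mult_assoc gr_mult_elems gr_one_mult)

lemma gr_conj_by_gr_of:
  assumes "k \<in> carrier G" and "g \<in> carrier G"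
  shows "gr_conj_by G (gr_of G k) (gr_of G (inv k)) (gr_of G (k \<otimes> g \<otimes> inv k)) (gr_of G g)"
  using assms by (simp add: gr_conj_by_def gr_of_elems gr_of_mult gr_one_def m_assoc r_inv)
    (simp add: m_assoc[symmetric])

lemma torsion_unit_V_aug_smult:
  fixes a :: "'a \<Rightarrow> int"
  assumes "gr_unit G a" and "n > 0" and "gr_pow G a n = gr_one G"
  shows "gr_aug G a * gr_aug G a = 1" and "torsion_unit_V G (\<lambda>x. gr_aug G a * a x)"
proof -
  have "gr_aug G a ^ n = 1"
    using arg_cong[OF assms(3), of "gr_aug G"] by (simp add: gr_aug_pow gr_aug_one)
  then have "gr_aug G a dvd 1"
    using assms(2) by (metis dvd_power)
  then show s: "gr_aug G a * gr_aug G a = 1"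
    using abs_mult_self_eq[of "gr_aug G a"] by simp
  show "torsion_unit_V G (\<lambda>x. gr_aug G a * a x)"
    unfolding torsion_unit_V_def using assms s \<open>gr_aug G a ^ n = 1\<close>
    by (auto simp: gr_unit_smult gr_aug_smult gr_pow_smult)
qed

definition conj_class :: "'a \<Rightarrow> 'a set" where
  "conj_class g = {k \<otimes> g \<otimes> inv k | k. k \<in> carrier G}"

lemma conj_class_self: "g \<in> carrier G \<Longrightarrow> g \<in> conj_class g"
  unfolding conj_class_def by (metis (mono_tags, lifting) mem_Collect_eq one_closed inv_one l_one r_one)

lemma conj_class_mult_swap:
  assumes "g \<in> carrier G" "h \<in> carrier G" "k \<in> carrier G" and "h \<otimes> k \<in> conj_class g"
  shows "k \<otimes> h \<in> conj_class g"
proof -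
  obtain m where m: "m \<in> carrier G" "h \<otimes> k = m \<otimes> g \<otimes> inv m"
    using assms(4) by (auto simp: conj_class_def)
  have "k \<otimes> h = inv h \<otimes> (h \<otimes> k) \<otimes> h"
    using assms by (simp add: m_assoc[symmetric])
  also have "\<dots> = (inv h \<otimes> m) \<otimes> g \<otimes> inv (inv h \<otimes> m)"
    using assms m by (simp add: m_assoc inv_mult_group)
  finally show ?thesis
    using assms m unfolding conj_class_def by blast
qed

definition partial_aug :: "'a set \<Rightarrow> ('a \<Rightarrow> 'r::comm_ring_1) \<Rightarrow> 'r" where
  "partial_aug C a = (\<Sum>g \<in> carrier G \<inter> C. a g)"

lemma partial_aug_cong:
  "(\<And>g. g \<in> carrier G \<Longrightarrow> a g = b g) \<Longrightarrow> partial_aug C a = partial_aug C b"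
  by (simp add: partial_aug_def)

lemma partial_aug_smult: "partial_aug C (\<lambda>x. c * a x) = c * partial_aug C a"
  by (simp add: partial_aug_def sum_distrib_left)

lemma partial_aug_of_int: "partial_aug C (\<lambda>x. of_int (a x)) = of_int (partial_aug C a)"
  by (simp add: partial_aug_def)

lemma partial_aug_gr_of:
  "g \<in> carrier G \<Longrightarrow> partial_aug C (gr_of G g) = (if g \<in> C then 1 else 0)"
  using finite_carrier by (simp add: partial_aug_def gr_of_def sum.If_cases)

lemma partial_aug_mult:
  "partial_aug C (gr_mult G a b)
     = (\<Sum>h\<in>carrier G. \<Sum>k\<in>carrier G. if h \<otimes> k \<in> C then a h * b k else 0)"
proof -
  have "partial_aug C (gr_mult G a b)
      = (\<Sum>g\<in>carrier G. \<Sum>h\<in>carrier G. if g \<in> C then a h * b (inv h \<otimes> g) else 0)"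
    by (auto simp: partial_aug_def gr_mult_def sum.inter_restrict[OF finite_carrier] intro!: sum.cong)
  also have "\<dots> = (\<Sum>h\<in>carrier G. \<Sum>g\<in>carrier G. if g \<in> C then a h * b (inv h \<otimes> g) else 0)"
    by (rule sum.swap)
  also have "\<dots> = (\<Sum>h\<in>carrier G. \<Sum>k\<in>carrier G. if h \<otimes> k \<in> C then a h * b k else 0)"
  proof (rule sum.cong[OF refl])
    fix h assume h: "h \<in> carrier G"
    show "(\<Sum>g\<in>carrier G. if g \<in> C then a h * b (inv h \<otimes> g) else 0) =
          (\<Sum>k\<in>carrier G. if h \<otimes> k \<in> C then a h * b k else 0)"
      by (subst sum_carrier_lmult[OF h]) (use h in \<open>auto simp: m_assoc[symmetric] intro!: sum.cong\<close>)
  qed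
  finally show ?thesis .
qed

lemma partial_aug_mult_commute:
  assumes "\<And>h k. h \<in> carrier G \<Longrightarrow> k \<in> carrier G \<Longrightarrow> h \<otimes> k \<in> C \<Longrightarrow> k \<otimes> h \<in> C"
  shows "partial_aug C (gr_mult G a b) = partial_aug C (gr_mult G b a)"
proof -
  have "partial_aug C (gr_mult G a b)
      = (\<Sum>k\<in>carrier G. \<Sum>h\<in>carrier G. if h \<otimes> k \<in> C then a h * b k else 0)"
    unfolding partial_aug_mult by (rule sum.swap)
  also have "\<dots> = partial_aug C (gr_mult G b a)"
    unfolding partial_aug_mult
    by (intro sum.cong refl) (use assms in \<open>auto simp: mult.commute\<close>)
  finally show ?thesis .
qed

lemma partial_aug_gr_conj_by:
  assumes "\<And>h k. h \<in> carrier G \<Longrightarrow> k \<in> carrier G \<Longrightarrow> h \<otimes> k \<in> C \<Longrightarrow> k \<otimes> h \<in> C"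
    and "gr_conj_by G w w' x y"
  shows "partial_aug C y = partial_aug C x"
proof -
  have "partial_aug C y = partial_aug C (gr_mult G w' (gr_mult G x w))"
    using assms(2) by (simp add: gr_conj_by_def gr_mult_assoc)
  also have "\<dots> = partial_aug C (gr_mult G x (gr_mult G w w'))"
    using partial_aug_mult_commute[OF assms(1), of w' "gr_mult G x w"] by (simp add: gr_mult_assoc)
  also have "\<dots> = partial_aug C x"
    using assms(2) unfolding gr_conj_by_def by (auto intro: partial_aug_cong simp: gr_mult_one_apply)
  finally show ?thesis .
qed

lemma partial_aug_conj_class_gr_conj_by_gr_of:
  fixes a :: "'a \<Rightarrow> int" and w w' :: "'a \<Rightarrow> 'r::{comm_ring_1, ring_char_0}"
  assumes "gr_conj_by G w w' (\<lambda>x. of_int (a x)) (gr_of G g)" and "g \<in> carrier G" "h \<in> carrier G"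
  shows "partial_aug (conj_class h) a = (if g \<in> conj_class h then 1 else 0)"
proof -
  have "(of_int (partial_aug (conj_class h) a) :: 'r) = partial_aug (conj_class h) (gr_of G g)"
    using partial_aug_gr_conj_by[OF conj_class_mult_swap[OF \<open>h \<in> carrier G\<close>] assms(1)]
    by (simp add: partial_aug_of_int)
  then show ?thesis
    using assms(2) by (simp add: partial_aug_gr_of split: if_splits)
qed

end

lemma group_C2: "group C2"
  by (rule groupI) (auto simp: C2_def)

lemma carrier_C2 [simp]: "carrier C2 = UNIV"
  by (simp add: C2_def)

lemma inv_C2 [simp]: "inv\<^bsub>C2\<^esub> e = e"
  by (rule group.inv_equality[OF group_C2]) (auto simp: C2_def)

text \<open>For \<open>c = 1\<close> and \<open>c = -1\<close>, the two characters of \<open>C\<^sub>2\<close>, \<open>c2_proj c\<close> is the ring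
  homomorphism \<open>R[G \<times> C\<^sub>2] \<rightarrow> R[G]\<close> induced by \<open>id \<times> \<chi>\<close>; if 2 is invertible in \<open>R\<close> the two
  together give \<open>R[G \<times> C\<^sub>2] \<cong> R[G] \<times> R[G]\<close>, with inverse \<open>c2_unproj\<close>.\<close>

definition c2_proj :: "'r::comm_ring_1 \<Rightarrow> ('a \<times> bool \<Rightarrow> 'r) \<Rightarrow> 'a \<Rightarrow> 'r" where
  "c2_proj c u = (\<lambda>x. u (x, False) + c * u (x, True))"

definition c2_unproj :: "('a \<Rightarrow> 'r::field_char_0) \<Rightarrow> ('a \<Rightarrow> 'r) \<Rightarrow> 'a \<times> bool \<Rightarrow> 'r" where
  "c2_unproj p q = (\<lambda>(x, e). if e then (p x - q x) / 2 else (p x + q x) / 2)"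

lemma c2_proj_unproj:
  "c2_proj 1 (c2_unproj p q) = p" "c2_proj (-1) (c2_unproj p q) = q"
  by (auto simp: c2_proj_def c2_unproj_def field_simps)

lemma c2_unproj_proj: "c2_unproj (c2_proj 1 u) (c2_proj (-1) u) = u"
  by (auto simp: c2_proj_def c2_unproj_def field_simps)

lemma c2_proj_inj:
  fixes u v :: "'a \<times> bool \<Rightarrow> 'r::field_char_0"
  assumes "c2_proj 1 u = c2_proj 1 v" and "c2_proj (-1) u = c2_proj (-1) v"
  shows "u = v"
  by (metis assms c2_unproj_proj)

lemma c2_proj_of_int: "c2_proj (of_int c) (\<lambda>x. of_int (u x)) = (\<lambda>x. of_int (c2_proj c u x))"
  by (simp add: c2_proj_def)

lemma c2_proj_elems: "u \<in> gr_elems (G \<times>\<times> C2) \<Longrightarrow> c2_proj c u \<in> gr_elems G"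
  by (simp add: gr_elems_def c2_proj_def)

lemma c2_unproj_elems: "p \<in> gr_elems G \<Longrightarrow> q \<in> gr_elems G \<Longrightarrow> c2_unproj p q \<in> gr_elems (G \<times>\<times> C2)"
  by (auto simp: gr_elems_def c2_unproj_def)

lemma c2_proj_gr_of:
  "c2_proj c (gr_of (G \<times>\<times> C2) (g, e)) = (\<lambda>x. (if e then c else 1) * gr_of G g x)"
  by (auto simp: c2_proj_def gr_of_def)

lemma gr_one_DirProd_C2: "gr_one (G \<times>\<times> C2) = gr_of (G \<times>\<times> C2) (\<one>\<^bsub>G\<^esub>, False)"
  by (simp add: gr_one_def C2_def)

lemma c2_proj_one: "c2_proj c (gr_one (G \<times>\<times> C2)) = gr_one G"
  unfolding gr_one_DirProd_C2 c2_proj_gr_of by (simp add: gr_one_def)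

lemma (in group) gr_mult_DirProd_C2:
  assumes "x \<in> carrier G"
  shows "gr_mult (G \<times>\<times> C2) u v (x, e) =
    (\<Sum>h\<in>carrier G. u (h, False) * v (inv h \<otimes> x, e) + u (h, True) * v (inv h \<otimes> x, \<not> e))"
proof -
  have "gr_mult (G \<times>\<times> C2) u v (x, e) =
      (\<Sum>h\<in>carrier G. \<Sum>f\<in>UNIV. u (h, f) * v (inv\<^bsub>G \<times>\<times> C2\<^esub> (h, f) \<otimes>\<^bsub>G \<times>\<times> C2\<^esub> (x, e)))"
    using assms by (simp add: gr_mult_def sum.cartesian_product split_def)
  also have "\<dots> = (\<Sum>h\<in>carrier G. \<Sum>f\<in>UNIV. u (h, f) * v (inv h \<otimes> x, f \<noteq> e))"
    by (intro sum.cong refl) (simp add: inv_DirProd[OF is_group group_C2], simp add: C2_def)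
  finally show ?thesis
    by (simp add: UNIV_bool add.commute)
qed

lemma (in group) c2_proj_mult:
  assumes "c * c = 1"
  shows "c2_proj c (gr_mult (G \<times>\<times> C2) u v) = gr_mult G (c2_proj c u) (c2_proj c v)"
proof
  fix x
  show "c2_proj c (gr_mult (G \<times>\<times> C2) u v) x = gr_mult G (c2_proj c u) (c2_proj c v) x"
  proof (cases "x \<in> carrier G")
    case True
    have cc: "c * (c * r) = r" for r
      using assms by (simp add: mult.assoc[symmetric])
    show ?thesis
      unfolding c2_proj_def gr_mult_DirProd_C2[OF True] using True
      by (simp add: gr_mult_def sum_distrib_left sum.distrib[symmetric] algebra_simps cc)
  qed (simp add: c2_proj_def gr_mult_def)
qed

lemma gr_aug_DirProd_C2: "gr_aug (G \<times>\<times> C2) u = gr_aug G (c2_proj 1 u)"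
proof -
  have "gr_aug (G \<times>\<times> C2) u = (\<Sum>x\<in>carrier G. \<Sum>e\<in>UNIV. u (x, e))"
    by (simp add: gr_aug_def sum.cartesian_product split_def)
  then show ?thesis
    by (simp add: gr_aug_def c2_proj_def UNIV_bool add.commute)
qed

lemma (in group) gr_conj_by_c2_unproj:
  fixes x y :: "'a \<times> bool \<Rightarrow> 'r::field_char_0"
  assumes "gr_conj_by G w1 w1' (c2_proj 1 x) (c2_proj 1 y)"
    and "gr_conj_by G w2 w2' (c2_proj (-1) x) (c2_proj (-1) y)"
  shows "gr_conj_by (G \<times>\<times> C2) (c2_unproj w1 w2) (c2_unproj w1' w2') x y"
  using assms unfolding gr_conj_by_def
  by (auto simp: c2_unproj_elems intro!: c2_proj_inj)
     (simp_all add: c2_proj_mult c2_proj_unproj c2_proj_one)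

context finite_group
begin

lemma torsion_unit_V_c2_proj:
  fixes u :: "'a \<times> bool \<Rightarrow> int"
  assumes "torsion_unit_V (G \<times>\<times> C2) u"
  shows "torsion_unit_V G (c2_proj 1 u)"
    and "\<exists>s. s * s = 1 \<and> torsion_unit_V G (\<lambda>x. s * c2_proj (-1) u x)"
proof -
  obtain n where u: "gr_unit (G \<times>\<times> C2) u" "gr_aug (G \<times>\<times> C2) u = 1"
    and n: "n > 0" "gr_pow (G \<times>\<times> C2) u n = gr_one (G \<times>\<times> C2)"
    using assms by (auto simp: torsion_unit_V_def)
  have unit: "gr_unit G (c2_proj c u)" if "c * c = 1" for c
    by (rule gr_unit_hom[OF u(1)]) (simp_all add: that c2_proj_mult c2_proj_one c2_proj_elems)
  have pow: "gr_pow G (c2_proj c u) n = gr_one G" if "c * c = 1" for c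
  proof -
    have "c2_proj c (gr_pow (G \<times>\<times> C2) u n) = gr_pow G (c2_proj c u) n"
      by (rule gr_pow_hom) (simp_all add: that c2_proj_mult c2_proj_one)
    then show ?thesis
      using n(2) by (simp add: c2_proj_one)
  qed
  show "torsion_unit_V G (c2_proj 1 u)"
    using unit pow n u(2) by (auto simp: torsion_unit_V_def gr_aug_DirProd_C2)
  show "\<exists>s. s * s = 1 \<and> torsion_unit_V G (\<lambda>x. s * c2_proj (-1) u x)"
    using torsion_unit_V_aug_smult[OF unit[of "-1"] n(1) pow[of "-1"]] by auto
qed

lemma even_partial_aug_c2_proj_diff:
  fixes u :: "'a \<times> bool \<Rightarrow> int"
  shows "even (partial_aug C (c2_proj 1 u) - partial_aug C (c2_proj (-1) u))"
proof -
  have "partial_aug C (c2_proj 1 u) - partial_aug C (c2_proj (-1) u)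
      = 2 * partial_aug C (\<lambda>x. u (x, True))"
    by (simp add: partial_aug_def c2_proj_def sum.distrib sum_subtractf sum_distrib_left)
  then show ?thesis by simp
qed

lemma gr_conj_by_c2_proj_conj_class:
  fixes u :: "'a \<times> bool \<Rightarrow> int" and w1 w1' w2 w2' :: "'a \<Rightarrow> 'r::{comm_ring_1, ring_char_0}"
  assumes "gr_conj_by G w1 w1' (\<lambda>x. of_int (c2_proj 1 u x)) (gr_of G g1)"
    and "gr_conj_by G w2 w2' (\<lambda>x. of_int (s * c2_proj (-1) u x)) (gr_of G g2)"
    and "s * s = 1" and "g1 \<in> carrier G" "g2 \<in> carrier G"
  shows "g2 \<in> conj_class g1"
proof (rule ccontr)
  assume "g2 \<notin> conj_class g1"
  have "partial_aug (conj_class g1) (c2_proj 1 u) = 1"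
    using partial_aug_conj_class_gr_conj_by_gr_of[OF assms(1,4,4)] conj_class_self[OF assms(4)]
    by simp
  moreover have "partial_aug (conj_class g1) (c2_proj (-1) u) = 0"
  proof -
    have "s * partial_aug (conj_class g1) (c2_proj (-1) u) = 0"
      using partial_aug_conj_class_gr_conj_by_gr_of[OF assms(2,5,4)] \<open>g2 \<notin> conj_class g1\<close>
      by (simp add: partial_aug_smult)
    with assms(3) show ?thesis
      by auto
  qed
  ultimately show False
    using even_partial_aug_c2_proj_diff[of "conj_class g1" u] by simp
qed

lemma QG_conj_to_group_elem_DirProd_C2:
  fixes u :: "'a \<times> bool \<Rightarrow> int" and w1 w1' w2 w2' :: "'a \<Rightarrow> rat"
  assumes "gr_conj_by G w1 w1' (\<lambda>x. of_int (c2_proj 1 u x)) (gr_of G g)"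
    and "gr_conj_by G w2 w2' (\<lambda>x. of_int (s * c2_proj (-1) u x)) (gr_of G g)"
    and "s * s = 1" and "g \<in> carrier G"
  shows "QG_conj_to_group_elem (G \<times>\<times> C2) u"
proof -
  define U where "U = (\<lambda>x. of_int (u x) :: rat)"
  define e where "e = (s \<noteq> 1)"
  define Y where "Y = (gr_of (G \<times>\<times> C2) (g, e) :: 'a \<times> bool \<Rightarrow> rat)"
  have s: "of_int s = (if e then -1 else 1 :: rat)"
    using assms(3) by (auto simp: e_def zmult_eq_1_iff)
  have ss: "of_int s * of_int s = (1 :: rat)"
    using assms(3) by (metis of_int_1 of_int_mult)
  have "gr_conj_by G w1 w1' (c2_proj 1 U) (c2_proj 1 Y)"
    using assms(1) by (simp add: U_def Y_def c2_proj_of_int[of 1, simplified] c2_proj_gr_of)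
  moreover have "gr_conj_by G w2 w2' (c2_proj (-1) U) (c2_proj (-1) Y)"
  proof -
    have "c2_proj (-1) U = (\<lambda>x. of_int s * of_int (s * c2_proj (-1) u x))"
      by (simp add: U_def c2_proj_def mult.assoc[symmetric] ss)
    moreover have "c2_proj (-1) Y = (\<lambda>x. of_int s * gr_of G g x)"
      by (simp add: Y_def c2_proj_gr_of s)
    ultimately show ?thesis
      using gr_conj_by_smult[OF assms(2)] by simp
  qed
  ultimately show ?thesis
    unfolding QG_conj_to_group_elem_iff using assms(4)
    by (auto simp: U_def Y_def intro!: exI bexI[of _ "(g, e)"] gr_conj_by_c2_unproj)
qed

end

theorem proposition2:
  fixes G :: "('a, 'm) monoid_scheme"
  assumes "group G" and "finite (carrier G)"
    and "ZC_property G"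
  shows "ZC_property (G \<times>\<times> C2)"
  unfolding ZC_property_def
proof (intro allI impI)
  interpret finite_group G
    using assms(1,2) by (simp add: finite_group_def finite_group_axioms_def)
  fix u assume u: "torsion_unit_V (G \<times>\<times> C2) u"
  obtain s where s: "s * s = 1" and u2: "torsion_unit_V G (\<lambda>x. s * c2_proj (-1) u x)"
    using torsion_unit_V_c2_proj(2)[OF u] by blast
  obtain w1 w1' :: "'a \<Rightarrow> rat" and g1 where g1: "g1 \<in> carrier G"
    and conj1: "gr_conj_by G w1 w1' (\<lambda>x. of_int (c2_proj 1 u x)) (gr_of G g1)"
    using assms(3) torsion_unit_V_c2_proj(1)[OF u]
    by (auto simp: ZC_property_def QG_conj_to_group_elem_iff)
  obtain w2 w2' :: "'a \<Rightarrow> rat" and g2 where g2: "g2 \<in> carrier G"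
    and conj2: "gr_conj_by G w2 w2' (\<lambda>x. of_int (s * c2_proj (-1) u x)) (gr_of G g2)"
    using assms(3) u2 by (auto simp: ZC_property_def QG_conj_to_group_elem_iff)
  obtain k where k: "k \<in> carrier G" and g2_conj: "g2 = k \<otimes>\<^bsub>G\<^esub> g1 \<otimes>\<^bsub>G\<^esub> inv\<^bsub>G\<^esub> k"
    using gr_conj_by_c2_proj_conj_class[OF conj1 conj2 s g1 g2] by (auto simp: conj_class_def)
  have "gr_conj_by G (gr_mult G w2 (gr_of G k)) (gr_mult G (gr_of G (inv\<^bsub>G\<^esub> k)) w2')
      (\<lambda>x. of_int (s * c2_proj (-1) u x)) (gr_of G g1)"
    using gr_conj_by_trans[OF conj2[unfolded g2_conj] gr_conj_by_gr_of[OF k g1]] .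
  then show "QG_conj_to_group_elem (G \<times>\<times> C2) u"
    by (rule QG_conj_to_group_elem_DirProd_C2[OF conj1 _ s g1])
qed

end
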